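(* Let $\ell$ be any bounded proper binary scoring rule. Then there exists another proper binary scoring rule $\tilde\ell$ and a constant $c>0$ such that for every sufficiently large $T$ there exist forecasts $\mathbf{p}^{(T)}\in[0,1]^T$ and outcomes $\mathbf{x}^{(T)}\in\{0,1\}^T$ with $\mathrm{Reg}_\ell(\mathbf p^{(T)},\mathbf x^{(T)})=o(T)$ (as $T\to\infty$) but $\mathrm{Reg}_{\tilde\ell}(\mathbf p^{(T)},\mathbf x^{(T)})\ge cT$.
   Context: A binary scoring rule is a function $\ell:[0,1]\times\{0,1\}\to\mathbb{R}$. For $p,q\in[0,1]$ write $\ell(p;q)=(1-q)\ell(p,0)+q\ell(p,1)$. It is proper if $\ell(p;p)\le\ell(p';p)$ for all $p,p'\in[0,1]$, and bounded if all its values lie in $[-1,1]$. For outcomes $\mathbf x\in\{0,1\}^T$ and forecasts $\mathbf p\in[0,1]^T$, with base rate $\beta=\frac1T\sum_t x_t$, the regret is $\mathrm{Reg}_\ell(\mathbf p,\mathbf x)=\sum_{t=1}^T\ell(p_t,x_t)-\sum_{t=1}^T\ell(\beta,x_t)$. *)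

theory Defs
  imports Complex_Main "HOL-Library.Landau_Symbols"
begin

text \<open>A binary scoring rule: forecasts are reals (only [0,1] matters),
outcomes are naturals (only 0 and 1 matter).\<close>

definition exp_loss :: "(real \<Rightarrow> nat \<Rightarrow> real) \<Rightarrow> real \<Rightarrow> real \<Rightarrow> real" where
  "exp_loss l p q = (1 - q) * l p 0 + q * l p 1"

definition proper_rule :: "(real \<Rightarrow> nat \<Rightarrow> real) \<Rightarrow> bool" where
  "proper_rule l \<longleftrightarrow> (\<forall>p\<in>{0..1}. \<forall>p'\<in>{0..1}. exp_loss l p p \<le> exp_loss l p' p)"

definition bounded_rule :: "(real \<Rightarrow> nat \<Rightarrow> real) \<Rightarrow> bool" where
  "bounded_rule l \<longleftrightarrow> (\<forall>p\<in>{0..1}. \<forall>x\<in>{0,1}. l p x \<in> {-1..1})"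

definition base_rate :: "nat \<Rightarrow> (nat \<Rightarrow> nat) \<Rightarrow> real" where
  "base_rate T x = (\<Sum>t<T. real (x t)) / real T"

definition regret :: "(real \<Rightarrow> nat \<Rightarrow> real) \<Rightarrow> nat \<Rightarrow> (nat \<Rightarrow> real) \<Rightarrow> (nat \<Rightarrow> nat) \<Rightarrow> real" where
  "regret l T p x = (\<Sum>t<T. l (p t) (x t)) - (\<Sum>t<T. l (base_rate T x) (x t))"

end

theory Submission
  imports Defs
begin

(* Let G(q) = exp_loss l q q be the Bayes risk of the proper rule l and J(q) the gap between G
   and its chord (1 - q) l(0,0) + q l(1,1); J is nonnegative and J(q) >= 2 q J(1/2) on [0,1/2].
   If J(1/2) = 0 then l(1/2,0) = l(0,0), so forecasting 1/2 on all-zero outcomes costs nothing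
   under l, while the Brier score charges 1/4 per round.
   Otherwise let the first h = T div 2 outcomes be ones and the rest zeros, and forecast perfectly
   except for m ones forecast as 0 and m zeros forecast as 1. Relative to perfect forecasts this
   costs m D under l, with D = l(0,1) + l(1,0) - l(0,0) - l(1,1), whereas the base-rate benchmark
   loses T J(h/T). Taking m = floor (T J(h/T) / D) makes the l-regret bounded, but the rule that
   charges 1 for every confident mistake has regret 2m, which is linear in T. *)

definition risk_gap :: "(real \<Rightarrow> nat \<Rightarrow> real) \<Rightarrow> real \<Rightarrow> real" where
  "risk_gap l q = exp_loss l q q - ((1 - q) * l 0 0 + q * l 1 1)"

definition swap_cost :: "(real \<Rightarrow> nat \<Rightarrow> real) \<Rightarrow> real" where
  "swap_cost l = l 0 1 + l 1 0 - l 0 0 - l 1 1"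

lemma proper_ruleD:
  assumes "proper_rule l" "q \<in> {0..1}" "p \<in> {0..1}"
  shows "exp_loss l q q \<le> exp_loss l p q"
  using assms unfolding proper_rule_def by blast

lemma proper_rule_loss0_ge:
  assumes "proper_rule l" "q \<in> {0..1}"
  shows "l 0 0 \<le> l q 0"
  using proper_ruleD[OF assms(1) _ assms(2), of 0] by (simp add: exp_loss_def)

lemma proper_rule_loss1_ge:
  assumes "proper_rule l" "q \<in> {0..1}"
  shows "l 1 1 \<le> l q 1"
  using proper_ruleD[OF assms(1) _ assms(2), of 1] by (simp add: exp_loss_def)

lemma risk_gap_nonneg:
  assumes "proper_rule l" "q \<in> {0..1}"
  shows "0 \<le> risk_gap l q"
proof -
  have "(1 - q) * l 0 0 \<le> (1 - q) * l q 0" "q * l 1 1 \<le> q * l q 1"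
    using assms proper_rule_loss0_ge proper_rule_loss1_ge by (auto intro: mult_left_mono)
  then show ?thesis by (simp add: risk_gap_def exp_loss_def)
qed

lemma risk_gap_le_swap_cost:
  assumes "proper_rule l" "q \<in> {0..1}"
  shows "risk_gap l q \<le> q * swap_cost l"
proof -
  have "exp_loss l q q \<le> (1 - q) * l 0 0 + q * l 0 1"
    using proper_ruleD[OF assms, of 0] by (simp add: exp_loss_def)
  moreover have "q * l 0 0 \<le> q * l 1 0"
    using assms proper_rule_loss0_ge[OF assms(1), of 1] by (auto intro: mult_left_mono)
  ultimately show ?thesis by (simp add: risk_gap_def swap_cost_def algebra_simps)
qed

lemma swap_cost_pos:
  assumes "proper_rule l" "risk_gap l (1/2) > 0"
  shows "0 < swap_cost l"
  using assms risk_gap_le_swap_cost[OF assms(1), of "1/2"] by simp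

lemma risk_gap_ge_half:
  assumes "proper_rule l" "q \<in> {0..1/2}"
  shows "2 * q * risk_gap l (1/2) \<le> risk_gap l q"
proof -
  have "exp_loss l q q = (1 - 2 * q) * l q 0 + 2 * q * exp_loss l q (1/2)"
    by (simp add: exp_loss_def algebra_simps)
  moreover have "(1 - 2 * q) * l 0 0 \<le> (1 - 2 * q) * l q 0"
    using assms proper_rule_loss0_ge[OF assms(1), of q] by (auto intro: mult_left_mono)
  moreover have "2 * q * exp_loss l (1/2) (1/2) \<le> 2 * q * exp_loss l q (1/2)"
    using assms proper_ruleD[OF assms(1), of "1/2" q] by (auto intro: mult_left_mono)
  ultimately show ?thesis by (simp add: risk_gap_def exp_loss_def algebra_simps)
qed

lemma risk_gap_half_eq_0D:
  assumes "proper_rule l" "risk_gap l (1/2) = 0"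
  shows "l (1/2) 0 = l 0 0"
  using assms proper_rule_loss0_ge[OF assms(1), of "1/2"] proper_rule_loss1_ge[OF assms(1), of "1/2"]
  by (simp add: risk_gap_def exp_loss_def)

definition brier_loss :: "real \<Rightarrow> nat \<Rightarrow> real" where
  "brier_loss p x = (p - real x)\<^sup>2"

lemma proper_brier_loss: "proper_rule brier_loss"
  unfolding proper_rule_def
proof (intro ballI)
  fix p p' :: real
  have "exp_loss brier_loss p' p - exp_loss brier_loss p p = (p' - p)\<^sup>2"
    by (simp add: exp_loss_def brier_loss_def power2_eq_square algebra_simps)
  then show "exp_loss brier_loss p p \<le> exp_loss brier_loss p' p"
    by (metis diff_ge_0_iff_ge zero_le_power2)
qed

definition miss_loss :: "real \<Rightarrow> nat \<Rightarrow> real" where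
  "miss_loss p x = (if (p = 0 \<and> x = 1) \<or> (p = 1 \<and> x = 0) then 1 else 0)"

lemma proper_miss_loss: "proper_rule miss_loss"
  unfolding proper_rule_def exp_loss_def miss_loss_def by auto

lemma swap_cost_miss_loss: "swap_cost miss_loss = 2"
  by (simp add: swap_cost_def miss_loss_def)

lemma risk_gap_miss_loss:
  assumes "0 < q" "q < 1"
  shows "risk_gap miss_loss q = 0"
  using assms by (simp add: risk_gap_def exp_loss_def miss_loss_def)

definition first_ones :: "nat \<Rightarrow> nat \<Rightarrow> nat" where
  "first_ones h t = (if t < h then 1 else 0)"

definition swapped_forecast :: "nat \<Rightarrow> nat \<Rightarrow> nat \<Rightarrow> real" where
  "swapped_forecast m h t = (if m \<le> t \<and> t < h + m then 1 else 0)"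

lemma sum_first_ones:
  fixes f :: "nat \<Rightarrow> real"
  assumes "h \<le> T"
  shows "(\<Sum>t<T. f (first_ones h t)) = real h * f 1 + real (T - h) * f 0"
proof -
  have "(\<Sum>t<T. f (first_ones h t)) =
      (\<Sum>t\<in>{0..<h}. f (first_ones h t)) + (\<Sum>t\<in>{h..<T}. f (first_ones h t))"
    using assms by (simp add: lessThan_atLeast0 sum.atLeastLessThan_concat)
  also have "\<dots> = (\<Sum>t\<in>{0..<h}. f 1) + (\<Sum>t\<in>{h..<T}. f 0)"
    by (intro arg_cong2[where f = "(+)"] sum.cong) (auto simp: first_ones_def)
  finally show ?thesis by simp
qed

lemma base_rate_first_ones:
  assumes "h \<le> T"
  shows "base_rate T (first_ones h) = real h / real T"
  using sum_first_ones[OF assms, of real] by (simp add: base_rate_def)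

lemma sum_swapped_forecast:
  fixes f :: "real \<Rightarrow> nat \<Rightarrow> real"
  assumes "m \<le> h" "h + m \<le> T"
  shows "(\<Sum>t<T. f (swapped_forecast m h t) (first_ones h t)) =
    real m * swap_cost f + real h * f 1 1 + real (T - h) * f 0 0"
proof -
  let ?g = "\<lambda>t. f (swapped_forecast m h t) (first_ones h t)"
  have "(\<Sum>t<T. ?g t) = sum ?g {0..<m} + sum ?g {m..<h} + sum ?g {h..<h + m} + sum ?g {h + m..<T}"
    using assms by (simp add: lessThan_atLeast0 sum.atLeastLessThan_concat)
  also have "\<dots> = (\<Sum>t\<in>{0..<m}. f 0 1) + (\<Sum>t\<in>{m..<h}. f 1 1) + (\<Sum>t\<in>{h..<h + m}. f 1 0)
      + (\<Sum>t\<in>{h + m..<T}. f 0 0)"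
    using assms
    by (intro arg_cong2[where f = "(+)"] sum.cong) (auto simp: swapped_forecast_def first_ones_def)
  finally show ?thesis
    using assms by (simp add: swap_cost_def of_nat_diff algebra_simps)
qed

lemma regret_swapped_forecast:
  assumes "m \<le> h" "h + m \<le> T"
  shows "regret l T (swapped_forecast m h) (first_ones h) =
    real m * swap_cost l - real T * risk_gap l (real h / real T)"
proof -
  define \<beta> where "\<beta> = real h / real T"
  have h_eq: "real T * \<beta> = real h"
    using assms by (cases "T = 0") (auto simp: \<beta>_def)
  have "(\<Sum>t<T. l (swapped_forecast m h t) (first_ones h t)) =
      real m * swap_cost l + real T * ((1 - \<beta>) * l 0 0 + \<beta> * l 1 1)"
    using sum_swapped_forecast[OF assms, of l] assms by (simp add: of_nat_diff algebra_simps flip: h_eq)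
  moreover have "(\<Sum>t<T. l \<beta> (first_ones h t)) = real T * exp_loss l \<beta> \<beta>"
    using sum_first_ones[of h T "l \<beta>"] assms by (simp add: exp_loss_def of_nat_diff algebra_simps flip: h_eq)
  ultimately show ?thesis
    using base_rate_first_ones[of h T] assms
    by (simp add: regret_def risk_gap_def \<beta>_def[symmetric] algebra_simps)
qed

lemma regret_miss_loss_swapped_forecast:
  assumes "m \<le> h" "h + m \<le> T" "0 < h" "h < T"
  shows "regret miss_loss T (swapped_forecast m h) (first_ones h) = 2 * real m"
  using assms
  by (simp add: regret_swapped_forecast swap_cost_miss_loss risk_gap_miss_loss)

definition separating_sequences ::
    "(real \<Rightarrow> nat \<Rightarrow> real) \<Rightarrow> (real \<Rightarrow> nat \<Rightarrow> real) \<Rightarrow> real \<Rightarrow>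
     (nat \<Rightarrow> nat \<Rightarrow> real) \<Rightarrow> (nat \<Rightarrow> nat \<Rightarrow> nat) \<Rightarrow> bool" where
  "separating_sequences l l' c P X \<longleftrightarrow>
     (\<forall>\<^sub>F T in sequentially. \<forall>t<T. P T t \<in> {0..1} \<and> X T t \<in> {0,1}) \<and>
     (\<lambda>T. regret l T (P T) (X T)) \<in> o(\<lambda>T. real T) \<and>
     (\<forall>\<^sub>F T in sequentially. regret l' T (P T) (X T) \<ge> c * real T)"

lemma eventually_bounded_in_smallo_real:
  fixes f :: "nat \<Rightarrow> real"
  assumes "\<forall>\<^sub>F T in sequentially. \<bar>f T\<bar> \<le> C"
  shows "f \<in> o(\<lambda>T. real T)"
proof (rule landau_o.smallI)
  fix c :: real
  assume "0 < c"
  show "\<forall>\<^sub>F T in sequentially. norm (f T) \<le> c * norm (real T)"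
    using assms eventually_ge_at_top[of "nat \<lceil>C / c\<rceil>"]
  proof eventually_elim
    case (elim T)
    then have "C \<le> c * real T"
      using \<open>0 < c\<close> by (simp add: field_simps)
    then show ?case
      using elim by simp
  qed
qed

lemma separating_sequences_constant_half:
  assumes "proper_rule l" "risk_gap l (1/2) = 0"
  shows "separating_sequences l brier_loss (1/4) (\<lambda>_ _. 1/2) (\<lambda>_ _. 0)"
proof -
  have "regret l T (\<lambda>_. 1/2) (\<lambda>_. 0) = 0" for T
    using risk_gap_half_eq_0D[OF assms] by (simp add: regret_def base_rate_def)
  moreover have "regret brier_loss T (\<lambda>_. 1/2) (\<lambda>_. 0) = real T / 4" for T
    by (simp add: regret_def base_rate_def brier_loss_def power2_eq_square)
  ultimately show ?thesis
    by (simp add: separating_sequences_def)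
qed

lemma regret_swapped_forecast_bounds:
  assumes "proper_rule l" "risk_gap l (1/2) > 0" "2 \<le> T"
  defines "h \<equiv> T div 2"
  defines "m \<equiv> nat \<lfloor>real T * risk_gap l (real h / real T) / swap_cost l\<rfloor>"
  shows "m \<le> h" "h + m \<le> T"
    and "- swap_cost l < regret l T (swapped_forecast m h) (first_ones h)"
    and "regret l T (swapped_forecast m h) (first_ones h) \<le> 0"
    and "(real T - 1) * risk_gap l (1/2) - swap_cost l < real m * swap_cost l"
proof -
  define \<beta> where "\<beta> = real h / real T"
  define D where "D = swap_cost l"
  have D_pos: "0 < D"
    using swap_cost_pos[OF assms(1,2)] by (simp add: D_def)
  have T\<beta>: "real T * \<beta> = real h"
    using assms(3) by (simp add: \<beta>_def)
  have \<beta>: "\<beta> \<in> {0..1/2}"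
    using assms(3) by (auto simp: \<beta>_def h_def field_simps)
  have gap_nonneg: "0 \<le> real T * risk_gap l \<beta>"
    using risk_gap_nonneg[OF assms(1), of \<beta>] \<beta> by simp
  then have m_eq: "real m = of_int \<lfloor>real T * risk_gap l \<beta> / D\<rfloor>"
    using D_pos by (simp add: m_def \<beta>_def D_def)
  have m_upper: "real m * D \<le> real T * risk_gap l \<beta>"
    unfolding m_eq using floor_divide_lower[OF D_pos] .
  have m_lower: "real T * risk_gap l \<beta> - D < real m * D"
    unfolding m_eq using floor_divide_upper[OF D_pos, of "real T * risk_gap l \<beta>"]
    by (simp add: algebra_simps)
  have "real T * risk_gap l \<beta> \<le> real T * (\<beta> * D)"
    using risk_gap_le_swap_cost[OF assms(1), of \<beta>] \<beta> by (intro mult_left_mono) (auto simp: D_def)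
  also have "\<dots> = real h * D"
    by (simp only: mult.assoc[symmetric] T\<beta>)
  finally have "real m * D \<le> real h * D"
    using m_upper by linarith
  then show "m \<le> h"
    using D_pos by simp
  then show "h + m \<le> T"
    by (simp add: h_def)
  have regret_eq: "regret l T (swapped_forecast m h) (first_ones h) = real m * D - real T * risk_gap l \<beta>"
    using regret_swapped_forecast[OF \<open>m \<le> h\<close> \<open>h + m \<le> T\<close>] by (simp add: \<beta>_def D_def)
  show "- swap_cost l < regret l T (swapped_forecast m h) (first_ones h)"
    "regret l T (swapped_forecast m h) (first_ones h) \<le> 0"
    using m_lower m_upper by (simp_all add: regret_eq D_def)
  have "(real T - 1) * risk_gap l (1/2) \<le> 2 * real h * risk_gap l (1/2)"
    using assms(2,3) by (intro mult_right_mono) (auto simp: h_def)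
  also have "\<dots> = real T * (2 * \<beta> * risk_gap l (1/2))"
    using T\<beta> by (simp add: algebra_simps)
  also have "\<dots> \<le> real T * risk_gap l \<beta>"
    using risk_gap_ge_half[OF assms(1) \<beta>] by (intro mult_left_mono) auto
  finally show "(real T - 1) * risk_gap l (1/2) - swap_cost l < real m * swap_cost l"
    using m_lower by (simp add: D_def)
qed

lemma separating_sequences_swapped_forecast:
  assumes "proper_rule l" "risk_gap l (1/2) > 0"
  defines "c \<equiv> risk_gap l (1/2) / swap_cost l"
  shows "separating_sequences l miss_loss c
    (\<lambda>T. swapped_forecast (nat \<lfloor>real T * risk_gap l (real (T div 2) / real T) / swap_cost l\<rfloor>) (T div 2))
    (\<lambda>T. first_ones (T div 2))"
  (is "separating_sequences l miss_loss c (\<lambda>T. swapped_forecast (?m T) (?h T)) _")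
proof -
  note bounds = regret_swapped_forecast_bounds[OF assms(1,2)]
  have D_pos: "0 < swap_cost l"
    by (rule swap_cost_pos[OF assms(1,2)])
  have c_pos: "0 < c"
    using assms(2) D_pos by (simp add: c_def)
  have "\<forall>\<^sub>F T in sequentially. \<bar>regret l T (swapped_forecast (?m T) (?h T)) (first_ones (?h T))\<bar> \<le> swap_cost l"
    using eventually_ge_at_top[of 2]
  proof eventually_elim
    case (elim T)
    show ?case
      using bounds(3,4)[OF elim] by linarith
  qed
  moreover have "\<forall>\<^sub>F T in sequentially.
      c * real T \<le> regret miss_loss T (swapped_forecast (?m T) (?h T)) (first_ones (?h T))"
    using eventually_ge_at_top[of "max 2 (nat \<lceil>2 + 2 / c\<rceil>)"]
  proof eventually_elim
    case (elim T)
    then have T: "2 \<le> T" "2 / c \<le> real T - 2"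
      by linarith+
    have "(real T - 1) * c - 1 < real (?m T)"
      using bounds(5)[OF T(1)] D_pos by (simp add: c_def field_simps)
    moreover have "2 \<le> (real T - 2) * c"
      using T(2) c_pos by (simp add: field_simps)
    moreover have "0 < ?h T" "?h T < T"
      using T(1) by auto
    ultimately show ?case
      using bounds(1,2)[OF T(1)] by (simp add: regret_miss_loss_swapped_forecast algebra_simps)
  qed
  ultimately show ?thesis
    unfolding separating_sequences_def
    by (auto simp: swapped_forecast_def first_ones_def intro: eventually_bounded_in_smallo_real)
qed

theorem theorem3p2:
  fixes l :: "real \<Rightarrow> nat \<Rightarrow> real"
  assumes "proper_rule l" and "bounded_rule l"
  shows "\<exists>l' :: real \<Rightarrow> nat \<Rightarrow> real. proper_rule l' \<and>
    (\<exists>c::real. c > 0 \<and>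
      (\<exists>P :: nat \<Rightarrow> nat \<Rightarrow> real. \<exists>X :: nat \<Rightarrow> nat \<Rightarrow> nat.
        (\<forall>\<^sub>F T in sequentially. (\<forall>t<T. P T t \<in> {0..1} \<and> X T t \<in> {0,1})) \<and>
        (\<lambda>T. regret l T (P T) (X T)) \<in> o(\<lambda>T. real T) \<and>
        (\<forall>\<^sub>F T in sequentially. regret l' T (P T) (X T) \<ge> c * real T)))"
proof -
  have "\<exists>l' c P X. proper_rule l' \<and> 0 < c \<and> separating_sequences l l' c P X"
  proof (cases "risk_gap l (1/2) = 0")
    case True
    then show ?thesis
      using separating_sequences_constant_half[OF assms(1)] proper_brier_loss by force
  next
    case False
    then have "risk_gap l (1/2) > 0"
      using risk_gap_nonneg[OF assms(1), of "1/2"] by simp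
    moreover have "risk_gap l (1/2) / swap_cost l > 0"
      using calculation swap_cost_pos[OF assms(1)] by simp
    ultimately show ?thesis
      using separating_sequences_swapped_forecast[OF assms(1)] proper_miss_loss by blast
  qed
  then show ?thesis
    unfolding separating_sequences_def by blast
qed

end
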